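(* Setting: $\mathcal{I}$ and $\mathcal{J}$ are finite sets; for each $i\in\mathcal{I}$, $\mathcal{A}_i$ is a finite set with $|\mathcal{A}_i|\ge2$; for each $j\in\mathcal{J}$, $\mathcal{I}_j\subseteq\mathcal{I}$, and $\mathcal{J}_i=\{j\in\mathcal{J}: i\in\mathcal{I}_j\}$. Let $\mathcal{L}=\{j\in\mathcal{J}:|\mathcal{I}_j|\ge2\}$ and $\mathcal{Y}=\{i\in\mathcal{I}:\exists j\in\mathcal{J}_i \text{ with } |\mathcal{I}_j|=1\}$. For $i\in\mathcal{Y}$ let $h_i:\mathcal{A}_i\to(0,\infty)$, and for each $j\in\mathcal{L}$ let $\mathcal{B}_j\subseteq\prod_{i\in\mathcal{I}_j}\mathcal{A}_i$ (elements written $\mathbf{b}=(b_i)_{i\in\mathcal{I}_j}$). Let $\mathcal{B}=\{\mathbf{x}\in\prod_{i\in\mathcal{I}}\mathcal{A}_i:(x_i)_{i\in\mathcal{I}_j}\in\mathcal{B}_j\ \forall j\in\mathcal{L}\}$, and assume $\mathbf{P}_{\mathcal{Y}}:\mathbf{x}\mapsto(x_i)_{i\in\mathcal{Y}}$ is injective on $\mathcal{B}$. For each $i\in\mathcal{I}$ fix $\alpha_i\in\mathcal{A}_i$, let $\mathcal{A}_i^-=\mathcal{A}_i\setminus\{\alpha_i\}$, and for $i\in\mathcal{I}\setminus\mathcal{Y}$ fix $t_i\in\mathcal{J}_i$. Relaxed LP A (variables $\tilde g_i^{(\alpha)}$ for $i\in\mathcal{Y},\alpha\in\mathcal{A}_i^-$,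 and $p_{j,\mathbf{b}}$ for $j\in\mathcal{L},\mathbf{b}\in\mathcal{B}_j$): maximize $\sum_{i\in\mathcal{Y}}\sum_{\alpha\in\mathcal{A}_i^-}\log\frac{h_i(\alpha)}{h_i(\alpha_i)}\,\tilde g_i^{(\alpha)}$ over the polytope $\tilde{\mathcal{Q}}$ given by: $p_{j,\mathbf{b}}\ge0$ for all $j\in\mathcal{L},\mathbf{b}\in\mathcal{B}_j$; $\sum_{\mathbf{b}\in\mathcal{B}_j}p_{j,\mathbf{b}}=1$ for all $j\in\mathcal{L}$; $\tilde g_i^{(\alpha)}=\sum_{\mathbf{b}\in\mathcal{B}_j,b_i=\alpha}p_{j,\mathbf{b}}$ for all $i\in\mathcal{Y}$, $j\in\mathcal{J}_i\cap\mathcal{L}$, $\alpha\in\mathcal{A}_i^-$; and $\sum_{\mathbf{b}\in\mathcal{B}_j,b_i=\alpha}p_{j,\mathbf{b}}=\sum_{\mathbf{b}\in\mathcal{B}_{t_i},b_i=\alpha}p_{t_i,\mathbf{b}}$ for all $i\in\mathcal{I}\setminus\mathcal{Y}$, $j\in\mathcal{J}_i\setminus\{t_i\}$, $\alpha\in\mathcal{A}_i^-$. If the LP solution $(\tilde{\mathbf{g}}_{\mathrm{out}},\mathbf{p})$ is integral (all coordinates integers), the receiver outputs $\mathbf{x}_{\mathrm{out}}=\mathbf{P}_{\mathcal{Y}}^{-1}(\tilde{\boldsymbol{\Xi}}^{-1}(\tilde{\mathbf{g}}_{\mathrm{out}}))$, where $\tilde{\boldsymbol{\Xi}}(\mathbf{x}_{\mathcal{Y}})=(([\gamma=x_i])_{\gamma\in\mathcal{A}_i^-})_{i\in\mathcal{Y}}$;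 otherwise it reports a receiver failure. Relaxed LP B (variables $g_i^{(\alpha)}$ for $i\in\mathcal{I},\alpha\in\mathcal{A}_i$, and $p_{j,\mathbf{b}}$ as before): maximize $\sum_{i\in\mathcal{Y}}\sum_{\alpha\in\mathcal{A}_i}\log h_i(\alpha)\,g_i^{(\alpha)}$ over the polytope $\mathcal{Q}$ given by: $p_{j,\mathbf{b}}\ge0$; $\sum_{\mathbf{b}\in\mathcal{B}_j}p_{j,\mathbf{b}}=1$ for all $j\in\mathcal{L}$; and $g_i^{(\alpha)}=\sum_{\mathbf{b}\in\mathcal{B}_j,b_i=\alpha}p_{j,\mathbf{b}}$ for all $j\in\mathcal{L}$, $i\in\mathcal{I}_j$, $\alpha\in\mathcal{A}_i$. If the LP solution $(\bar{\mathbf{g}}_{\mathrm{out}},\mathbf{p})$ is integral, the receiver outputs $\mathbf{x}_{\mathrm{out}}=\bar{\boldsymbol{\Xi}}^{-1}(\bar{\mathbf{g}}_{\mathrm{out}})$, where $\bar{\boldsymbol{\Xi}}(\mathbf{x})=(([\gamma=x_i])_{\gamma\in\mathcal{A}_i})_{i\in\mathcal{I}}$; otherwise it reports a receiver failure. Claim: LP B produces the same output (configuration or receiver failure) as LP A. Moreover, if the receiver output is a configuration, then it is the optimum configuration, i.e. $\mathbf{x}_{\mathrm{out}}\in\mathcal{B}$ and $\mathbf{x}_{\mathrm{out}}=\mathbf{x}_{\mathrm{opt}}$, where $\mathbf{x}_{\mathrm{opt}}$ maximizes $\sum_{i\in\mathcal{Y}}\log h_i(x_i)$ over $\mathbf{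x}\in\mathcal{B}$.
   Context: $[P]$ denotes $1$ if the predicate $P$ holds and $0$ otherwise. The setting models maximization of a product of functions $u(\mathbf{x})=\prod_{i\in\mathcal{Y}}h_i(x_i)\prod_{j\in\mathcal{L}}[(x_i)_{i\in\mathcal{I}_j}\in\mathcal{B}_j]$ described by a factor graph, where pendant (degree-one) factor nodes are collected into the positive functions $h_i$ and every non-pendant factor node $j\in\mathcal{L}$ is the indicator function of a local behaviour $\mathcal{B}_j$; the optimum configuration $\mathbf{x}_{\mathrm{opt}}$ maximizes $u$. $\mathbf{P}_{\mathcal{Y}}^{-1}$ denotes the inverse of $\mathbf{P}_{\mathcal{Y}}$ restricted to $\mathcal{B}$. *)

theory Defs
  imports Complex_Main "HOL-Library.FuncSet"
begin

text \<open>Index types: 'i variable nodes, 'j factor nodes, 'a symbols.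
  Configurations are functions 'i \<Rightarrow> 'a (extensional on the relevant index set).\<close>

datatype 'x rx_output = Config 'x | Failure

definition Jset :: "'j set \<Rightarrow> ('j \<Rightarrow> 'i set) \<Rightarrow> 'i \<Rightarrow> 'j set" where
  "Jset J Ij i = {j \<in> J. i \<in> Ij j}"

definition Lset :: "'j set \<Rightarrow> ('j \<Rightarrow> 'i set) \<Rightarrow> 'j set" where
  "Lset J Ij = {j \<in> J. 2 \<le> card (Ij j)}"

definition Yset :: "'i set \<Rightarrow> 'j set \<Rightarrow> ('j \<Rightarrow> 'i set) \<Rightarrow> 'i set" where
  "Yset I J Ij = {i \<in> I. \<exists>j \<in> Jset J Ij i. card (Ij j) = 1}"

definition Bset :: "'i set \<Rightarrow> ('i \<Rightarrow> 'a set) \<Rightarrow> 'j set \<Rightarrow> ('j \<Rightarrow> 'i set)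
    \<Rightarrow> ('j \<Rightarrow> ('i \<Rightarrow> 'a) set) \<Rightarrow> ('i \<Rightarrow> 'a) set" where
  "Bset I A J Ij Bj = {x \<in> Pi\<^sub>E I A. \<forall>j \<in> Lset J Ij. restrict x (Ij j) \<in> Bj j}"

definition marg :: "('j \<Rightarrow> ('i \<Rightarrow> 'a) set) \<Rightarrow> ('j \<Rightarrow> ('i \<Rightarrow> 'a) \<Rightarrow> real) \<Rightarrow> 'j \<Rightarrow> 'i \<Rightarrow> 'a \<Rightarrow> real" where
  "marg Bj p j i a = (\<Sum>b \<in> {b \<in> Bj j. b i = a}. p j b)"

definition feasA :: "'i set \<Rightarrow> ('i \<Rightarrow> 'a set) \<Rightarrow> 'j set \<Rightarrow> ('j \<Rightarrow> 'i set)
    \<Rightarrow> ('j \<Rightarrow> ('i \<Rightarrow> 'a) set) \<Rightarrow> ('i \<Rightarrow> 'a) \<Rightarrow> ('i \<Rightarrow> 'j)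
    \<Rightarrow> ('i \<Rightarrow> 'a \<Rightarrow> real) \<times> ('j \<Rightarrow> ('i \<Rightarrow> 'a) \<Rightarrow> real) \<Rightarrow> bool" where
  "feasA I A J Ij Bj \<alpha> t s = (case s of (gt, p) \<Rightarrow>
     (\<forall>j \<in> Lset J Ij. \<forall>b \<in> Bj j. 0 \<le> p j b) \<and>
     (\<forall>j \<in> Lset J Ij. (\<Sum>b \<in> Bj j. p j b) = 1) \<and>
     (\<forall>i \<in> Yset I J Ij. \<forall>j \<in> Jset J Ij i \<inter> Lset J Ij. \<forall>a \<in> A i - {\<alpha> i}.
        gt i a = marg Bj p j i a) \<and>
     (\<forall>i \<in> I - Yset I J Ij. \<forall>j \<in> Jset J Ij i - {t i}. \<forall>a \<in> A i - {\<alpha> i}.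
        marg Bj p j i a = marg Bj p (t i) i a))"

definition objA :: "'i set \<Rightarrow> ('i \<Rightarrow> 'a set) \<Rightarrow> 'j set \<Rightarrow> ('j \<Rightarrow> 'i set)
    \<Rightarrow> ('i \<Rightarrow> 'a \<Rightarrow> real) \<Rightarrow> ('i \<Rightarrow> 'a)
    \<Rightarrow> ('i \<Rightarrow> 'a \<Rightarrow> real) \<times> ('j \<Rightarrow> ('i \<Rightarrow> 'a) \<Rightarrow> real) \<Rightarrow> real" where
  "objA I A J Ij h \<alpha> s = (case s of (gt, p) \<Rightarrow>
     (\<Sum>i \<in> Yset I J Ij. \<Sum>a \<in> A i - {\<alpha> i}. ln (h i a / h i (\<alpha> i)) * gt i a))"

definition optA where
  "optA I A J Ij Bj h \<alpha> t s \<longleftrightarrow> feasA I A J Ij Bj \<alpha> t s \<and>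
     (\<forall>s'. feasA I A J Ij Bj \<alpha> t s' \<longrightarrow> objA I A J Ij h \<alpha> s' \<le> objA I A J Ij h \<alpha> s)"

definition integralA :: "'i set \<Rightarrow> ('i \<Rightarrow> 'a set) \<Rightarrow> 'j set \<Rightarrow> ('j \<Rightarrow> 'i set)
    \<Rightarrow> ('j \<Rightarrow> ('i \<Rightarrow> 'a) set) \<Rightarrow> ('i \<Rightarrow> 'a)
    \<Rightarrow> ('i \<Rightarrow> 'a \<Rightarrow> real) \<times> ('j \<Rightarrow> ('i \<Rightarrow> 'a) \<Rightarrow> real) \<Rightarrow> bool" where
  "integralA I A J Ij Bj \<alpha> s = (case s of (gt, p) \<Rightarrow>
     (\<forall>i \<in> Yset I J Ij. \<forall>a \<in> A i - {\<alpha> i}. gt i a \<in> \<int>) \<and>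
     (\<forall>j \<in> Lset J Ij. \<forall>b \<in> Bj j. p j b \<in> \<int>))"

definition XiA_inv :: "'i set \<Rightarrow> ('i \<Rightarrow> 'a set) \<Rightarrow> 'j set \<Rightarrow> ('j \<Rightarrow> 'i set)
    \<Rightarrow> ('i \<Rightarrow> 'a) \<Rightarrow> ('i \<Rightarrow> 'a \<Rightarrow> real) \<Rightarrow> ('i \<Rightarrow> 'a)" where
  "XiA_inv I A J Ij \<alpha> gt = (THE xY. xY \<in> Pi\<^sub>E (Yset I J Ij) A \<and>
     (\<forall>i \<in> Yset I J Ij. \<forall>\<gamma> \<in> A i - {\<alpha> i}. gt i \<gamma> = (if \<gamma> = xY i then 1 else 0)))"

definition PY_inv :: "'i set \<Rightarrow> ('i \<Rightarrow> 'a set) \<Rightarrow> 'j set \<Rightarrow> ('j \<Rightarrow> 'i set)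
    \<Rightarrow> ('j \<Rightarrow> ('i \<Rightarrow> 'a) set) \<Rightarrow> ('i \<Rightarrow> 'a) \<Rightarrow> ('i \<Rightarrow> 'a)" where
  "PY_inv I A J Ij Bj xY = (THE x. x \<in> Bset I A J Ij Bj \<and> restrict x (Yset I J Ij) = xY)"

definition outA where
  "outA I A J Ij Bj \<alpha> s =
     (if integralA I A J Ij Bj \<alpha> s
      then Config (PY_inv I A J Ij Bj (XiA_inv I A J Ij \<alpha> (fst s)))
      else Failure)"

definition feasB :: "'i set \<Rightarrow> ('i \<Rightarrow> 'a set) \<Rightarrow> 'j set \<Rightarrow> ('j \<Rightarrow> 'i set)
    \<Rightarrow> ('j \<Rightarrow> ('i \<Rightarrow> 'a) set)
    \<Rightarrow> ('i \<Rightarrow> 'a \<Rightarrow> real) \<times> ('j \<Rightarrow> ('i \<Rightarrow> 'a) \<Rightarrow> real) \<Rightarrow> bool" where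
  "feasB I A J Ij Bj s = (case s of (g, p) \<Rightarrow>
     (\<forall>j \<in> Lset J Ij. \<forall>b \<in> Bj j. 0 \<le> p j b) \<and>
     (\<forall>j \<in> Lset J Ij. (\<Sum>b \<in> Bj j. p j b) = 1) \<and>
     (\<forall>j \<in> Lset J Ij. \<forall>i \<in> Ij j. \<forall>a \<in> A i. g i a = marg Bj p j i a))"

definition objB :: "'i set \<Rightarrow> ('i \<Rightarrow> 'a set) \<Rightarrow> 'j set \<Rightarrow> ('j \<Rightarrow> 'i set)
    \<Rightarrow> ('i \<Rightarrow> 'a \<Rightarrow> real)
    \<Rightarrow> ('i \<Rightarrow> 'a \<Rightarrow> real) \<times> ('j \<Rightarrow> ('i \<Rightarrow> 'a) \<Rightarrow> real) \<Rightarrow> real" where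
  "objB I A J Ij h s = (case s of (g, p) \<Rightarrow>
     (\<Sum>i \<in> Yset I J Ij. \<Sum>a \<in> A i. ln (h i a) * g i a))"

definition optB where
  "optB I A J Ij Bj h s \<longleftrightarrow> feasB I A J Ij Bj s \<and>
     (\<forall>s'. feasB I A J Ij Bj s' \<longrightarrow> objB I A J Ij h s' \<le> objB I A J Ij h s)"

definition integralB :: "'i set \<Rightarrow> ('i \<Rightarrow> 'a set) \<Rightarrow> 'j set \<Rightarrow> ('j \<Rightarrow> 'i set)
    \<Rightarrow> ('j \<Rightarrow> ('i \<Rightarrow> 'a) set)
    \<Rightarrow> ('i \<Rightarrow> 'a \<Rightarrow> real) \<times> ('j \<Rightarrow> ('i \<Rightarrow> 'a) \<Rightarrow> real) \<Rightarrow> bool" where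
  "integralB I A J Ij Bj s = (case s of (g, p) \<Rightarrow>
     (\<forall>i \<in> I. \<forall>a \<in> A i. g i a \<in> \<int>) \<and>
     (\<forall>j \<in> Lset J Ij. \<forall>b \<in> Bj j. p j b \<in> \<int>))"

definition XiB_inv :: "'i set \<Rightarrow> ('i \<Rightarrow> 'a set) \<Rightarrow> ('i \<Rightarrow> 'a \<Rightarrow> real) \<Rightarrow> ('i \<Rightarrow> 'a)" where
  "XiB_inv I A g = (THE x. x \<in> Pi\<^sub>E I A \<and>
     (\<forall>i \<in> I. \<forall>\<gamma> \<in> A i. g i \<gamma> = (if \<gamma> = x i then 1 else 0)))"

definition outB where
  "outB I A J Ij Bj s =
     (if integralB I A J Ij Bj s then Config (XiB_inv I A (fst s)) else Failure)"

definition is_opt_config where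
  "is_opt_config I A J Ij Bj h x \<longleftrightarrow> x \<in> Bset I A J Ij Bj \<and>
     (\<forall>y \<in> Bset I A J Ij Bj. (\<Sum>i \<in> Yset I J Ij. ln (h i (y i))) \<le> (\<Sum>i \<in> Yset I J Ij. ln (h i (x i))))"

end

theory Submission
  imports Defs
begin

text \<open>Every variable node lies in some factor of \<open>\<L>\<close>, and the constraints of LP A force all
  factors containing a variable to induce the same marginal on it (for the reference symbol
  \<open>\<alpha>\<^sub>i\<close> by normalisation). Hence a solution of LP A determines a solution of LP B with the same
  \<open>p\<close>, and conversely every solution of LP B solves LP A. On the feasible set the two objectives
  differ only by the constant \<open>\<Sum>\<^sub>i\<^sub>\<in>\<^sub>\<Y> log h\<^sub>i(\<alpha>\<^sub>i)\<close>, so the optima correspond. Integrality of either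
  solution is integrality of \<open>p\<close>, and an integral \<open>p\<close> is a point mass on the local patterns of a
  single configuration in \<open>\<B>\<close>, which both receivers output. Since every configuration of \<open>\<B>\<close>
  gives such a point-mass solution, whose LP B objective is its log-likelihood, that configuration
  is optimal.\<close>

lemma nonneg_Ints_sum_eq_1_imp_indicator:
  fixes p :: "'b \<Rightarrow> real"
  assumes "finite S" and "\<forall>b\<in>S. p b \<in> \<int> \<and> 0 \<le> p b" and "sum p S = 1"
  shows "\<exists>c\<in>S. \<forall>b\<in>S. p b = (if b = c then 1 else 0)"
proof -
  have zero_or_one: "p b = 0 \<or> p b = 1" if "b \<in> S" for b
  proof -
    have "p b \<in> \<int>" using assms(2) that by blast
    then obtain n where n: "p b = of_int n" by (rule Ints_cases)
    have "p b \<le> 1" using member_le_sum[of b S p] that assms by auto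
    then have "0 \<le> n" "n \<le> 1" using assms(2) that n by auto
    then show ?thesis using n by auto
  qed
  have "\<exists>c\<in>S. p c \<noteq> 0"
  proof (rule ccontr)
    assume "\<not> (\<exists>c\<in>S. p c \<noteq> 0)"
    then have "sum p S = 0" by simp
    then show False using assms(3) by simp
  qed
  then obtain c where c: "c \<in> S" "p c = 1" using zero_or_one by blast
  have "p b = 0" if "b \<in> S" "b \<noteq> c" for b
  proof -
    have "sum p {b, c} \<le> sum p S" using that c assms(1,2) by (intro sum_mono2) auto
    then have "p b + p c \<le> 1" using that(2) assms(3) by simp
    then show ?thesis using c zero_or_one[OF that(1)] by auto
  qed
  then show ?thesis using c by auto
qed

lemma sum_ln_weighted_eq_shift:
  fixes h g :: "'b \<Rightarrow> real"
  assumes "finite S" "c \<in> S" "\<forall>a\<in>S. 0 < h a" "(\<Sum>a\<in>S. g a) = 1"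
  shows "(\<Sum>a\<in>S. ln (h a) * g a) = ln (h c) + (\<Sum>a\<in>S - {c}. ln (h a / h c) * g a)"
proof -
  have "(\<Sum>a\<in>S - {c}. ln (h a / h c) * g a) = (\<Sum>a\<in>S - {c}. ln (h a) * g a - ln (h c) * g a)"
    using assms(2,3) by (intro sum.cong refl) (auto simp: ln_div left_diff_distrib)
  also have "\<dots> = (\<Sum>a\<in>S - {c}. ln (h a) * g a) - ln (h c) * (\<Sum>a\<in>S - {c}. g a)"
    by (simp add: sum_subtractf sum_distrib_left)
  finally have shifted: "(\<Sum>a\<in>S - {c}. ln (h a / h c) * g a)
      = (\<Sum>a\<in>S - {c}. ln (h a) * g a) - ln (h c) * (\<Sum>a\<in>S - {c}. g a)" .
  moreover have "(\<Sum>a\<in>S - {c}. g a) = 1 - g c"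
    using sum.remove[OF assms(1,2), of g] assms(4) by simp
  moreover have "(\<Sum>a\<in>S. ln (h a) * g a) = ln (h c) * g c + (\<Sum>a\<in>S - {c}. ln (h a) * g a)"
    using sum.remove[OF assms(1,2)] .
  ultimately show ?thesis by (simp add: right_diff_distrib)
qed

lemma XiB_inv_cong:
  assumes "\<forall>i\<in>I. \<forall>a\<in>A i. g i a = g' i a"
  shows "XiB_inv I A g = XiB_inv I A g'"
  unfolding XiB_inv_def using assms by metis

lemma XiB_inv_indicator:
  assumes "x \<in> Pi\<^sub>E I A" "\<forall>i\<in>I. \<forall>a\<in>A i. g i a = (if a = x i then 1 else 0)"
  shows "XiB_inv I A g = x"
  unfolding XiB_inv_def
proof (rule the_equality)
  fix y assume y: "y \<in> Pi\<^sub>E I A \<and> (\<forall>i\<in>I. \<forall>\<gamma>\<in>A i. g i \<gamma> = (if \<gamma> = y i then 1 else 0))"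
  show "y = x"
  proof (rule PiE_ext[OF conjunct1[OF y] assms(1)])
    fix i assume i: "i \<in> I"
    have "y i \<in> A i" using y i by (auto simp: PiE_def)
    then have "g i (y i) = 1" using y i by auto
    then show "y i = x i" using assms(2) i \<open>y i \<in> A i\<close> by (auto split: if_splits)
  qed
qed (use assms in auto)

lemma XiA_inv_indicator:
  assumes "Yset I J Ij \<subseteq> I" "x \<in> Pi\<^sub>E I A"
    and "\<forall>i\<in>Yset I J Ij. \<forall>a\<in>A i - {\<alpha> i}. gt i a = (if a = x i then 1 else 0)"
  shows "XiA_inv I A J Ij \<alpha> gt = restrict x (Yset I J Ij)"
  unfolding XiA_inv_def
proof (rule the_equality)
  let ?Y = "Yset I J Ij"
  have x_Y: "restrict x ?Y \<in> Pi\<^sub>E ?Y A" using assms(1,2) by auto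
  then show "restrict x ?Y \<in> Pi\<^sub>E ?Y A \<and>
      (\<forall>i\<in>?Y. \<forall>\<gamma>\<in>A i - {\<alpha> i}. gt i \<gamma> = (if \<gamma> = restrict x ?Y i then 1 else 0))"
    using assms(3) by auto
  fix y assume y: "y \<in> Pi\<^sub>E ?Y A \<and> (\<forall>i\<in>?Y. \<forall>\<gamma>\<in>A i - {\<alpha> i}. gt i \<gamma> = (if \<gamma> = y i then 1 else 0))"
  show "y = restrict x ?Y"
  proof (rule PiE_ext[OF conjunct1[OF y] x_Y])
    fix i assume i: "i \<in> ?Y"
    have yi: "y i \<in> A i" and xi: "x i \<in> A i" using y assms(1,2) i by (auto simp: PiE_def)
    show "y i = restrict x ?Y i"
    proof (cases "x i = \<alpha> i")
      case False
      then have "gt i (x i) = 1" using assms(3) i xi by auto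
      then show ?thesis using y i xi False by (auto split: if_splits)
    next
      case True
      have "gt i (y i) = 0" if "y i \<noteq> \<alpha> i" using assms(3) i yi True that by auto
      moreover have "gt i (y i) = 1" if "y i \<noteq> \<alpha> i" using y i yi that by auto
      ultimately show ?thesis using i True by force
    qed
  qed
qed

locale factor_graph_lp =
  fixes I :: "'i set" and J :: "'j set" and A :: "'i \<Rightarrow> 'a set"
    and Ij :: "'j \<Rightarrow> 'i set" and h :: "'i \<Rightarrow> 'a \<Rightarrow> real"
    and Bj :: "'j \<Rightarrow> ('i \<Rightarrow> 'a) set" and \<alpha> :: "'i \<Rightarrow> 'a" and t :: "'i \<Rightarrow> 'j"
  assumes finite_I: "finite I" and finite_J: "finite J"
    and finite_A: "\<forall>i \<in> I. finite (A i) \<and> 2 \<le> card (A i)"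
    and factor_subset: "\<forall>j \<in> J. Ij j \<subseteq> I"
    and h_pos: "\<forall>i \<in> Yset I J Ij. \<forall>a \<in> A i. 0 < h i a"
    and Bj_subset: "\<forall>j \<in> Lset J Ij. Bj j \<subseteq> Pi\<^sub>E (Ij j) A"
    and inj_PY: "inj_on (\<lambda>x. restrict x (Yset I J Ij)) (Bset I A J Ij Bj)"
    and alpha_in_A: "\<forall>i \<in> I. \<alpha> i \<in> A i"
    and t_in_Jset: "\<forall>i \<in> I - Yset I J Ij. t i \<in> Jset J Ij i"
    and Y_has_L_factor: "\<forall>i \<in> Yset I J Ij. Jset J Ij i \<inter> Lset J Ij \<noteq> {}"
begin

abbreviation "L \<equiv> Lset J Ij"
abbreviation "Y \<equiv> Yset I J Ij"
abbreviation "B \<equiv> Bset I A J Ij Bj"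

abbreviation "feasible_A \<equiv> feasA I A J Ij Bj \<alpha> t"
abbreviation "feasible_B \<equiv> feasB I A J Ij Bj"
abbreviation "objective_A \<equiv> objA I A J Ij h \<alpha>"
abbreviation "objective_B \<equiv> objB I A J Ij h"
abbreviation "optimal_A \<equiv> optA I A J Ij Bj h \<alpha> t"
abbreviation "optimal_B \<equiv> optB I A J Ij Bj h"
abbreviation "output_A \<equiv> outA I A J Ij Bj \<alpha>"
abbreviation "output_B \<equiv> outB I A J Ij Bj"

lemma L_factor_subset: "j \<in> L \<Longrightarrow> Ij j \<subseteq> I"
  using factor_subset by (auto simp: Lset_def)

lemma finite_Bj: assumes "j \<in> L" shows "finite (Bj j)"
proof -
  have "finite (Pi\<^sub>E (Ij j) A)"
    using L_factor_subset[OF assms] finite_I finite_A by (intro finite_PiE) (auto intro: finite_subset)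
  then show ?thesis using Bj_subset assms finite_subset by blast
qed

lemma Bj_mem_A: "j \<in> L \<Longrightarrow> b \<in> Bj j \<Longrightarrow> i \<in> Ij j \<Longrightarrow> b i \<in> A i"
  using Bj_subset by (auto simp: PiE_def Pi_def)

lemma Y_subset_I: "Y \<subseteq> I"
  by (auto simp: Yset_def)

lemma Jset_non_Y_subset_L: assumes "i \<in> I - Y" "j \<in> Jset J Ij i" shows "j \<in> L"
proof -
  have j: "j \<in> J" "i \<in> Ij j" using assms(2) by (auto simp: Jset_def)
  then have "finite (Ij j)" using factor_subset finite_I finite_subset by blast
  then have "card (Ij j) \<noteq> 0" using j by auto
  moreover have "card (Ij j) \<noteq> 1" using assms by (auto simp: Yset_def)
  ultimately show ?thesis using j by (simp add: Lset_def)
qed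

lemma ex_L_factor: assumes "i \<in> I" shows "\<exists>j\<in>L. i \<in> Ij j"
proof (cases "i \<in> Y")
  case True then show ?thesis using Y_has_L_factor by (auto simp: Jset_def)
next
  case False
  then show ?thesis using t_in_Jset Jset_non_Y_subset_L assms by (auto simp: Jset_def)
qed

definition home_factor :: "'i \<Rightarrow> 'j" where
  "home_factor i = (SOME j. j \<in> L \<and> i \<in> Ij j)"

lemma home_factor: "i \<in> I \<Longrightarrow> home_factor i \<in> L \<and> i \<in> Ij (home_factor i)"
  unfolding home_factor_def using ex_L_factor by (metis (mono_tags, lifting) someI_ex)

definition marginal :: "('j \<Rightarrow> ('i \<Rightarrow> 'a) \<Rightarrow> real) \<Rightarrow> 'i \<Rightarrow> 'a \<Rightarrow> real" where
  "marginal p i a = marg Bj p (home_factor i) i a"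

lemma sum_marg: assumes "j \<in> L" "i \<in> Ij j"
  shows "(\<Sum>a\<in>A i. marg Bj p j i a) = (\<Sum>b\<in>Bj j. p j b)"
proof -
  have "finite (A i)" using L_factor_subset[OF assms(1)] assms(2) finite_A by auto
  then show ?thesis unfolding marg_def
    using sum.group[of "Bj j" "A i" "\<lambda>b. b i" "p j"] finite_Bj[OF assms(1)]
      Bj_mem_A[OF assms(1) _ assms(2)] by auto
qed

lemma feasible_B_imp_feasible_A: "feasible_B (g, p) \<Longrightarrow> feasible_A (g, p)"
  unfolding feasB_def feasA_def
proof (clarsimp, intro conjI ballI)
  fix i j a
  assume g: "\<forall>j\<in>L. \<forall>i\<in>Ij j. \<forall>a\<in>A i. g i a = marg Bj p j i a"
  show "g i a = marg Bj p j i a" if "j \<in> Jset J Ij i \<inter> L" "a \<in> A i - {\<alpha> i}"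
    using g that by (auto simp: Jset_def)
  show "marg Bj p j i a = marg Bj p (t i) i a"
    if i: "i \<in> I - Y" and j: "j \<in> Jset J Ij i - {t i}" and a: "a \<in> A i - {\<alpha> i}"
  proof -
    have t: "t i \<in> Jset J Ij i" using t_in_Jset i by auto
    then have "j \<in> L" "t i \<in> L" "i \<in> Ij j" "i \<in> Ij (t i)"
      using Jset_non_Y_subset_L i j by (auto simp: Jset_def)
    then show ?thesis using g a by (metis DiffD1)
  qed
qed

text \<open>The constraints of LP A tie every factor to \<open>\<tilde>g\<^sub>i\<close> (for \<open>i \<in> \<Y>\<close>) or to \<open>t\<^sub>i\<close> (otherwise).\<close>

lemma feasible_A_marg_agree_off_alpha:
  assumes f: "feasible_A (gt, p)" and "j \<in> L" "i \<in> Ij j" "k \<in> L" "i \<in> Ij k"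
    and a: "a \<in> A i - {\<alpha> i}"
  shows "marg Bj p j i a = marg Bj p k i a"
proof -
  have i: "i \<in> I" using L_factor_subset assms(2,3) by blast
  have jk: "j \<in> Jset J Ij i" "k \<in> Jset J Ij i" using assms(2-5) by (auto simp: Jset_def Lset_def)
  show ?thesis
  proof (cases "i \<in> Y")
    case True
    then have "\<forall>l\<in>Jset J Ij i \<inter> L. gt i a = marg Bj p l i a"
      using f a unfolding feasA_def by auto
    then show ?thesis using jk assms(2,4) by (metis IntI)
  next
    case False
    then have "marg Bj p l i a = marg Bj p (t i) i a" if "l \<in> Jset J Ij i" for l
      using f a i that unfolding feasA_def by (cases "l = t i") auto
    then show ?thesis using jk by metis
  qed
qed

lemma feasible_A_marg_agree:
  assumes f: "feasible_A (gt, p)" and j: "j \<in> L" "i \<in> Ij j" and k: "k \<in> L" "i \<in> Ij k"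
    and a: "a \<in> A i"
  shows "marg Bj p j i a = marg Bj p k i a"
proof (cases "a = \<alpha> i")
  case True
  have i: "i \<in> I" using L_factor_subset j by blast
  then have fin: "finite (A i)" and alpha: "\<alpha> i \<in> A i" using finite_A alpha_in_A by auto
  have "(\<Sum>a\<in>A i. marg Bj p j i a) = (\<Sum>a\<in>A i. marg Bj p k i a)"
    using sum_marg[OF j] sum_marg[OF k] f j k by (simp add: feasA_def)
  moreover have "(\<Sum>a\<in>A i - {\<alpha> i}. marg Bj p j i a) = (\<Sum>a\<in>A i - {\<alpha> i}. marg Bj p k i a)"
    using feasible_A_marg_agree_off_alpha[OF f j k] by (rule sum.cong[OF refl])
  ultimately show ?thesis
    using True sum.remove[OF fin alpha, of "marg Bj p j i"] sum.remove[OF fin alpha, of "marg Bj p k i"]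
    by simp
next
  case False
  then show ?thesis using feasible_A_marg_agree_off_alpha[OF f j k] a by blast
qed

lemma feasible_A_imp_feasible_B_marginal:
  assumes f: "feasible_A (gt, p)" shows "feasible_B (marginal p, p)"
  unfolding feasB_def prod.case
proof (intro conjI ballI)
  show "0 \<le> p j b" if "j \<in> L" "b \<in> Bj j" for j b
    using f that by (auto simp: feasA_def)
  show "sum (p j) (Bj j) = 1" if "j \<in> L" for j
    using f that by (auto simp: feasA_def)
  show "marginal p i a = marg Bj p j i a" if "j \<in> L" "i \<in> Ij j" "a \<in> A i" for j i a
    unfolding marginal_def using feasible_A_marg_agree[OF f] home_factor L_factor_subset that
    by blast
qed

lemma feasible_A_eq_marginal:
  assumes f: "feasible_A (gt, p)" and "i \<in> Y" "a \<in> A i - {\<alpha> i}"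
  shows "gt i a = marginal p i a"
proof -
  obtain j where j: "j \<in> Jset J Ij i \<inter> L" using Y_has_L_factor assms(2) by blast
  have i: "i \<in> I" using Y_subset_I assms(2) by blast
  have "gt i a = marg Bj p j i a" using f j assms(2,3) unfolding feasA_def by auto
  also have "\<dots> = marginal p i a" unfolding marginal_def
    using feasible_A_marg_agree_off_alpha[OF f _ _ home_factor[OF i, THEN conjunct1]
        home_factor[OF i, THEN conjunct2] assms(3)] j by (auto simp: Jset_def)
  finally show ?thesis .
qed

lemma feasible_B_eq_marginal:
  "feasible_B (g, p) \<Longrightarrow> i \<in> I \<Longrightarrow> a \<in> A i \<Longrightarrow> g i a = marginal p i a"
  unfolding feasB_def marginal_def using home_factor by auto

lemma feasible_B_sum_eq_1:
  assumes f: "feasible_B (g, p)" and i: "i \<in> I" shows "(\<Sum>a\<in>A i. g i a) = 1"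
proof -
  have "(\<Sum>a\<in>A i. g i a) = (\<Sum>a\<in>A i. marg Bj p (home_factor i) i a)"
    using feasible_B_eq_marginal[OF f i] by (simp add: marginal_def)
  also have "\<dots> = 1" using sum_marg home_factor[OF i] f by (simp add: feasB_def)
  finally show ?thesis .
qed

definition log_offset :: real where
  "log_offset = (\<Sum>i\<in>Y. ln (h i (\<alpha> i)))"

lemma objective_B_eq_objective_A:
  assumes f: "feasible_B (g, p)" and eq: "\<forall>i\<in>Y. \<forall>a\<in>A i - {\<alpha> i}. gt i a = g i a"
  shows "objective_B (g, p) = log_offset + objective_A (gt, q)"
proof -
  have "objective_B (g, p)
      = (\<Sum>i\<in>Y. ln (h i (\<alpha> i)) + (\<Sum>a\<in>A i - {\<alpha> i}. ln (h i a / h i (\<alpha> i)) * g i a))"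
    unfolding objB_def prod.case using Y_subset_I finite_A alpha_in_A h_pos
    by (intro sum.cong refl sum_ln_weighted_eq_shift feasible_B_sum_eq_1[OF f]) auto
  also have "\<dots> = log_offset + objective_A (gt, q)"
    unfolding log_offset_def objA_def sum.distrib using eq by simp
  finally show ?thesis .
qed

lemma objective_B_marginal:
  assumes "feasible_A (gt, p)"
  shows "objective_B (marginal p, p) = log_offset + objective_A (gt, p)"
  using feasible_A_eq_marginal[OF assms]
  by (intro objective_B_eq_objective_A feasible_A_imp_feasible_B_marginal[OF assms]) auto

lemma optimal_B_imp_optimal_A:
  assumes o: "optimal_B (g, p)" shows "optimal_A (g, p)"
  unfolding optA_def
proof (intro conjI allI impI)
  have f: "feasible_B (g, p)" using o by (simp add: optB_def)
  then show "feasible_A (g, p)" by (rule feasible_B_imp_feasible_A)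
  fix s assume f': "feasible_A s"
  obtain gt' p' where s: "s = (gt', p')" by (cases s)
  have "log_offset + objective_A s = objective_B (marginal p', p')"
    using objective_B_marginal f' s by simp
  also have "\<dots> \<le> objective_B (g, p)"
    using o feasible_A_imp_feasible_B_marginal f' s by (simp add: optB_def)
  also have "\<dots> = log_offset + objective_A (g, p)"
    using objective_B_eq_objective_A[OF f] by simp
  finally show "objective_A s \<le> objective_A (g, p)" by simp
qed

lemma optimal_A_imp_optimal_B_marginal:
  assumes o: "optimal_A (gt, p)" shows "optimal_B (marginal p, p)"
  unfolding optB_def
proof (intro conjI allI impI)
  have f: "feasible_A (gt, p)" using o by (simp add: optA_def)
  then show "feasible_B (marginal p, p)" by (rule feasible_A_imp_feasible_B_marginal)
  fix s assume f': "feasible_B s"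
  obtain g' p' where s: "s = (g', p')" by (cases s)
  have "objective_B s = log_offset + objective_A s"
    using objective_B_eq_objective_A[of g' p' g' p'] f' s by simp
  also have "\<dots> \<le> log_offset + objective_A (gt, p)"
    using o feasible_B_imp_feasible_A f' s by (simp add: optA_def)
  also have "\<dots> = objective_B (marginal p, p)" using objective_B_marginal[OF f] by simp
  finally show "objective_B s \<le> objective_B (marginal p, p)" .
qed

definition integral_p :: "('j \<Rightarrow> ('i \<Rightarrow> 'a) \<Rightarrow> real) \<Rightarrow> bool" where
  "integral_p p \<longleftrightarrow> (\<forall>j\<in>L. \<forall>b\<in>Bj j. p j b \<in> \<int>)"

lemma marginal_Ints: "integral_p p \<Longrightarrow> i \<in> I \<Longrightarrow> marginal p i a \<in> \<int>"
  unfolding marginal_def marg_def integral_p_def using home_factor by (auto intro!: Ints_sum)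

lemma integralB_iff:
  assumes "feasible_B (g, p)" shows "integralB I A J Ij Bj (g, p) \<longleftrightarrow> integral_p p"
  using feasible_B_eq_marginal[OF assms] marginal_Ints unfolding integralB_def
  by (auto simp: integral_p_def)

lemma integralA_iff:
  assumes "feasible_A (gt, p)" shows "integralA I A J Ij Bj \<alpha> (gt, p) \<longleftrightarrow> integral_p p"
  using feasible_A_eq_marginal[OF assms] marginal_Ints Y_subset_I unfolding integralA_def
  by (auto simp: integral_p_def)

lemma integral_feasible_B_point_mass:
  assumes f: "feasible_B (g, p)" and int: "integral_p p"
  shows "\<exists>x\<in>B. \<forall>i\<in>I. \<forall>a\<in>A i. g i a = (if a = x i then 1 else 0)"
proof -
  have "\<forall>j\<in>L. \<exists>c\<in>Bj j. \<forall>b\<in>Bj j. p j b = (if b = c then 1 else 0)"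
    by (intro ballI nonneg_Ints_sum_eq_1_imp_indicator)
      (use f int finite_Bj in \<open>auto simp: feasB_def integral_p_def\<close>)
  then obtain c where c: "\<And>j. j \<in> L \<Longrightarrow> c j \<in> Bj j \<and> (\<forall>b\<in>Bj j. p j b = (if b = c j then 1 else 0))"
    by metis
  have marg_c: "marg Bj p j i a = (if c j i = a then 1 else 0)" if j: "j \<in> L" for j i a
  proof -
    have "marg Bj p j i a = (\<Sum>b\<in>{b\<in>Bj j. b i = a}. if c j = b then 1 else 0)"
      unfolding marg_def using c[OF j] by (intro sum.cong) auto
    also have "\<dots> = (if c j i = a then 1 else 0)"
      using finite_Bj[OF j] c[OF j] by (subst sum.delta') auto
    finally show ?thesis .
  qed
  define x where "x = (\<lambda>i. if i \<in> I then c (home_factor i) i else undefined)"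
  have g_x: "g i a = (if a = x i then 1 else 0)" if "i \<in> I" "a \<in> A i" for i a
    using feasible_B_eq_marginal[OF f that] marg_c home_factor[OF that(1)] that(1)
    unfolding marginal_def x_def by auto
  have "c (home_factor i) i \<in> A i" if "i \<in> I" for i
    using Bj_mem_A c home_factor[OF that] by blast
  then have x_PiE: "x \<in> Pi\<^sub>E I A" unfolding x_def by auto
  have "restrict x (Ij j) = c j" if j: "j \<in> L" for j
  proof
    fix i show "restrict x (Ij j) i = c j i"
    proof (cases "i \<in> Ij j")
      case True
      have i: "i \<in> I" using L_factor_subset[OF j] True by blast
      then have xi: "x i \<in> A i" using x_PiE by (auto simp: PiE_def)
      have "g i (x i) = marg Bj p j i (x i)" using f j True xi by (auto simp: feasB_def)
      then show ?thesis using g_x[OF i xi] marg_c[OF j] True by (auto split: if_splits)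
    next
      case False
      have "c j \<in> Pi\<^sub>E (Ij j) A" using c[OF j] Bj_subset j by blast
      then show ?thesis using False by (auto simp: PiE_def extensional_def)
    qed
  qed
  then have "x \<in> B" unfolding Bset_def using x_PiE c by auto
  then show ?thesis using g_x by blast
qed

lemma PY_inv_restrict: "x \<in> B \<Longrightarrow> PY_inv I A J Ij Bj (restrict x Y) = x"
  unfolding PY_inv_def using inj_PY by (intro the_equality) (auto simp: inj_on_def)

lemma output_B_integral:
  assumes f: "feasible_B (g, p)" and int: "integral_p p"
  obtains x where "x \<in> B" "output_B (g, p) = Config x"
    "\<forall>i\<in>I. \<forall>a\<in>A i. g i a = (if a = x i then 1 else 0)"
proof -
  obtain x where x: "x \<in> B" "\<forall>i\<in>I. \<forall>a\<in>A i. g i a = (if a = x i then 1 else 0)"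
    using integral_feasible_B_point_mass[OF f int] by blast
  then have "XiB_inv I A g = x" by (intro XiB_inv_indicator) (simp_all add: Bset_def)
  then show ?thesis using that x f int integralB_iff by (simp add: outB_def)
qed

lemma output_A_eq_output_B_marginal:
  assumes f: "feasible_A (gt, p)"
  shows "output_A (gt, p) = output_B (marginal p, p)"
proof -
  have fB: "feasible_B (marginal p, p)" using feasible_A_imp_feasible_B_marginal[OF f] .
  show ?thesis
  proof (cases "integral_p p")
    case False
    then show ?thesis using integralA_iff[OF f] integralB_iff[OF fB] by (simp add: outA_def outB_def)
  next
    case True
    then obtain x where x: "x \<in> B" "output_B (marginal p, p) = Config x"
        "\<forall>i\<in>I. \<forall>a\<in>A i. marginal p i a = (if a = x i then 1 else 0)"
      using output_B_integral[OF fB] by blast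
    have "XiA_inv I A J Ij \<alpha> gt = restrict x Y"
      using x(1,3) feasible_A_eq_marginal[OF f] Y_subset_I
      by (intro XiA_inv_indicator) (auto simp: Bset_def)
    then show ?thesis using x True integralA_iff[OF f] PY_inv_restrict by (simp add: outA_def)
  qed
qed

lemma output_B_eq_output_B_marginal:
  assumes f: "feasible_B (g, p)"
  shows "output_B (g, p) = output_B (marginal p, p)"
proof -
  have "feasible_B (marginal p, p)"
    using feasible_A_imp_feasible_B_marginal[OF feasible_B_imp_feasible_A[OF f]] .
  moreover have "XiB_inv I A g = XiB_inv I A (marginal p)"
    using feasible_B_eq_marginal[OF f] by (intro XiB_inv_cong) auto
  ultimately show ?thesis using integralB_iff f by (simp add: outB_def)
qed

lemma objective_B_indicator:
  assumes "y \<in> Pi\<^sub>E I A" "\<forall>i\<in>Y. \<forall>a\<in>A i. g i a = (if a = y i then 1 else 0)"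
  shows "objective_B (g, p) = (\<Sum>i\<in>Y. ln (h i (y i)))"
proof -
  have "(\<Sum>a\<in>A i. ln (h i a) * g i a) = ln (h i (y i))" if i: "i \<in> Y" for i
  proof -
    have "finite (A i)" "y i \<in> A i" using assms(1) i Y_subset_I finite_A by auto
    moreover have "(\<Sum>a\<in>A i. ln (h i a) * g i a) = (\<Sum>a\<in>A i. if a = y i then ln (h i a) else 0)"
      using assms(2) i by (intro sum.cong) auto
    ultimately show ?thesis by simp
  qed
  then show ?thesis unfolding objB_def by simp
qed

lemma feasible_B_config:
  assumes "y \<in> B"
  shows "feasible_B (\<lambda>i a. if a = y i then 1 else 0, \<lambda>j b. if b = restrict y (Ij j) then 1 else 0)"
  unfolding feasB_def prod.case marg_def
  using assms finite_Bj by (auto simp: Bset_def sum.delta if_distrib cong: if_cong)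

lemma optimal_B_output_is_opt_config:
  assumes o: "optimal_B (g, p)" and out: "output_B (g, p) = Config x"
  shows "is_opt_config I A J Ij Bj h x"
proof -
  have f: "feasible_B (g, p)" using o by (simp add: optB_def)
  have "integral_p p" using out integralB_iff[OF f] by (simp add: outB_def split: if_splits)
  then obtain x' where x': "x' \<in> B" "output_B (g, p) = Config x'"
      "\<forall>i\<in>I. \<forall>a\<in>A i. g i a = (if a = x' i then 1 else 0)"
    using output_B_integral[OF f] by blast
  then have x: "x \<in> B" "x \<in> Pi\<^sub>E I A" using out by (auto simp: Bset_def)
  have obj_x: "objective_B (g, p) = (\<Sum>i\<in>Y. ln (h i (x i)))"
    using x' out x Y_subset_I by (intro objective_B_indicator) auto
  show ?thesis unfolding is_opt_config_def
  proof (intro conjI ballI)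
    fix y assume y: "y \<in> B"
    let ?s = "(\<lambda>i a. if a = y i then 1 else 0, \<lambda>j b. if b = restrict y (Ij j) then 1 else 0)
      :: ('i \<Rightarrow> 'a \<Rightarrow> real) \<times> ('j \<Rightarrow> ('i \<Rightarrow> 'a) \<Rightarrow> real)"
    have "(\<Sum>i\<in>Y. ln (h i (y i))) = objective_B ?s"
      using y by (intro objective_B_indicator[symmetric]) (auto simp: Bset_def)
    also have "\<dots> \<le> objective_B (g, p)" using o feasible_B_config[OF y] by (simp add: optB_def)
    finally show "(\<Sum>i\<in>Y. ln (h i (y i))) \<le> (\<Sum>i\<in>Y. ln (h i (x i)))" using obj_x by simp
  qed (use x in simp)
qed

end

theorem theorem1:
  fixes I :: "'i set" and J :: "'j set" and A :: "'i \<Rightarrow> 'a set"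
    and Ij :: "'j \<Rightarrow> 'i set" and h :: "'i \<Rightarrow> 'a \<Rightarrow> real"
    and Bj :: "'j \<Rightarrow> ('i \<Rightarrow> 'a) set" and \<alpha> :: "'i \<Rightarrow> 'a" and t :: "'i \<Rightarrow> 'j"
  assumes "finite I" and "finite J"
    and "\<forall>i \<in> I. finite (A i) \<and> 2 \<le> card (A i)"
    and "\<forall>j \<in> J. Ij j \<subseteq> I"
    and "\<forall>i \<in> Yset I J Ij. \<forall>a \<in> A i. 0 < h i a"
    and "\<forall>j \<in> Lset J Ij. Bj j \<subseteq> Pi\<^sub>E (Ij j) A"
    and "inj_on (\<lambda>x. restrict x (Yset I J Ij)) (Bset I A J Ij Bj)"
    and "\<forall>i \<in> I. \<alpha> i \<in> A i"
    and "\<forall>i \<in> I - Yset I J Ij. t i \<in> Jset J Ij i"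
    and "\<forall>i \<in> Yset I J Ij. Jset J Ij i \<inter> Lset J Ij \<noteq> {}"
  shows "{outB I A J Ij Bj s | s. optB I A J Ij Bj h s}
           = {outA I A J Ij Bj \<alpha> s | s. optA I A J Ij Bj h \<alpha> t s}
       \<and> (\<forall>s x. optA I A J Ij Bj h \<alpha> t s \<longrightarrow> outA I A J Ij Bj \<alpha> s = Config x
              \<longrightarrow> is_opt_config I A J Ij Bj h x)
       \<and> (\<forall>s x. optB I A J Ij Bj h s \<longrightarrow> outB I A J Ij Bj s = Config x
              \<longrightarrow> is_opt_config I A J Ij Bj h x)"
proof -
  interpret factor_graph_lp I J A Ij h Bj \<alpha> t using assms by unfold_locales
  have B_to_A: "optimal_A (g, p) \<and> output_A (g, p) = output_B (g, p)" if "optimal_B (g, p)" for g p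
  proof -
    have f: "feasible_B (g, p)" using that by (simp add: optB_def)
    have "output_A (g, p) = output_B (marginal p, p)"
      by (rule output_A_eq_output_B_marginal[OF feasible_B_imp_feasible_A[OF f]])
    also have "\<dots> = output_B (g, p)" by (rule output_B_eq_output_B_marginal[OF f, symmetric])
    finally show ?thesis using optimal_B_imp_optimal_A[OF that] by simp
  qed
  have A_to_B: "optimal_B (marginal p, p) \<and> output_A (gt, p) = output_B (marginal p, p)"
    if "optimal_A (gt, p)" for gt p
    using optimal_A_imp_optimal_B_marginal[OF that] output_A_eq_output_B_marginal that
    by (simp add: optA_def)
  have "{output_B s | s. optimal_B s} = {output_A s | s. optimal_A s}"
    using B_to_A A_to_B by (auto, metis surj_pair, metis surj_pair)
  moreover have opt_B: "is_opt_config I A J Ij Bj h x"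
    if "optimal_B s" "output_B s = Config x" for s x
    using that optimal_B_output_is_opt_config by (cases s) simp
  moreover have "is_opt_config I A J Ij Bj h x"
    if "optimal_A s" "output_A s = Config x" for s x
    using that A_to_B opt_B by (cases s) metis
  ultimately show ?thesis by blast
qed

end
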